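(* Let $T>0$, $\rho$ a density operator on a finite-dimensional Hilbert space, and $H(\theta)=\sum_{j=1}^J\theta_jH_j$ with $\theta\in\mathbb{R}^J$ and $H_j$ Hermitian. Then for each $j$, $$\frac{\partial}{\partial\theta_j}\operatorname{Tr}\!\left[\operatorname{erf}\!\left(\tfrac{\sqrt2\,H(\theta)}{T}\right)\rho\right]=\frac{2}{T}\sqrt{\frac{2}{\pi}}\;\mathbb{E}_{t\sim\phi,\,s\sim\upsilon}\!\left[\operatorname{Re}\operatorname{Tr}\!\left[H_j\,e^{iH(\theta)2t/T}\,\mathcal{U}^{H(\theta)}_{2st/T}(\rho)\right]\right].$$
   Context: $\operatorname{erf}(x)\coloneqq\frac{2}{\sqrt\pi}\int_0^xe^{-y^2}dy$ (functional calculus for operators); $\phi(t)=\frac{1}{\sqrt{2\pi}}e^{-t^2/2}$ is the standard Gaussian density; $\upsilon$ is the uniform distribution on $[0,1]$; for Hermitian $K$, $\mathcal{U}^{K}_{t}(X)\coloneqq e^{-iKt}Xe^{iKt}$. *)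

theory Defs
  imports "HOL-Analysis.Analysis" "HOL-Probability.Probability"
begin

definition cmat_scale :: "complex \<Rightarrow> complex^'n^'m \<Rightarrow> complex^'n^'m" where
  "cmat_scale c A = (\<chi> i j. c * A $ i $ j)"

definition adjoint :: "complex^'n^'m \<Rightarrow> complex^'m^'n" where
  "adjoint A = (\<chi> i j. cnj (A $ j $ i))"

definition hermitian :: "complex^'n^'n \<Rightarrow> bool" where
  "hermitian A \<longleftrightarrow> adjoint A = A"

definition mtrace :: "complex^'n^'n \<Rightarrow> complex" where
  "mtrace A = (\<Sum>i\<in>UNIV. A $ i $ i)"

definition positive_semidef :: "complex^'n^'n \<Rightarrow> bool" where
  "positive_semidef A \<longleftrightarrow> hermitian A \<and>
     (\<forall>x::complex^'n. 0 \<le> Re (\<Sum>i\<in>UNIV. cnj (x $ i) * (A *v x) $ i))"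

definition density_operator :: "complex^'n^'n \<Rightarrow> bool" where
  "density_operator \<rho> \<longleftrightarrow> positive_semidef \<rho> \<and> mtrace \<rho> = 1"

fun mpow :: "complex^'n^'n \<Rightarrow> nat \<Rightarrow> complex^'n^'n" where
  "mpow A 0 = mat 1"
| "mpow A (Suc k) = A ** mpow A k"

definition mexp :: "complex^'n^'n \<Rightarrow> complex^'n^'n" where
  "mexp A = (\<Sum>k. (1 / fact k) *\<^sub>R mpow A k)"

text \<open>erf as an operator function, via the everywhere convergent Taylor series
  erf(x) = 2/sqrt(pi) * sum_n (-1)^n x^(2n+1) / (n! (2n+1)); for Hermitian arguments this
  coincides with the spectral functional calculus.\<close>
definition merf :: "complex^'n^'n \<Rightarrow> complex^'n^'n" where
  "merf A = (2 / sqrt pi) *\<^sub>R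
     (\<Sum>n. ((-1) ^ n / (fact n * (2 * real n + 1))) *\<^sub>R mpow A (2 * n + 1))"

definition Uevol :: "complex^'n^'n \<Rightarrow> real \<Rightarrow> complex^'n^'n \<Rightarrow> complex^'n^'n" where
  "Uevol K t X = mexp (cmat_scale (- \<i> * of_real t) K) ** X ** mexp (cmat_scale (\<i> * of_real t) K)"

definition Hsum :: "('J::finite \<Rightarrow> complex^'n^'n) \<Rightarrow> real^'J \<Rightarrow> complex^'n^'n" where
  "Hsum Hs \<theta> = (\<Sum>j\<in>UNIV. cmat_scale (of_real (\<theta> $ j)) (Hs j))"

definition vec_upd :: "real^'J \<Rightarrow> 'J \<Rightarrow> real \<Rightarrow> real^'J" where
  "vec_upd \<theta> j x = (\<chi> k. if k = j then x else \<theta> $ k)"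

end

(*
  Both sides are expanded into the same series in the mixed traces
  gamma_m = sum_{p+q=m} Tr[K H^p rho H^q], where H = H(theta), K = H_j and a = sqrt 2 / T.

  Left side: erf(a (H + x K)) = 2/sqrt pi * sum_k erf_k (a (H + x K))^(2k+1); differentiating termwise
  (Weierstrass M-test), the derivative of the (2k+1)-st power contributes a^(2k+1) gamma_(2k) after
  cycling the trace, and gamma_m is real for hermitian H, K, rho.

  Right side: with w = 2t/T, e^(iwH) U_(sw)(rho) = e^(i(1-s)wH) rho e^(iswH), and the Cauchy product
  of the two exponential series gives sum_m (iw)^m sum_(p+q=m) (1-s)^p s^q / (p! q!) Tr[K H^p rho H^q].
  The Beta integrals over s in [0,1] turn this into (iw)^m gamma_m / (m+1)!, the Gaussian moments of t
  kill the odd m and give (2k)!/(2^k k!) for m = 2k, and dominated convergence (the partial sums are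
  bounded by C e^(c|t|)) justifies exchanging sum and integral. The two coefficient sequences agree.
*)

theory Submission
  imports Defs
begin

section \<open>Matrix algebra\<close>

lemma cmat_scale_nth [simp]: "cmat_scale c A $ i $ k = c * A $ i $ k"
  by (simp add: cmat_scale_def)

lemma cmat_scale_cmat_scale [simp]: "cmat_scale a (cmat_scale b A) = cmat_scale (a * b) A"
  by (simp add: vec_eq_iff)

lemma cmat_scale_one [simp]: "cmat_scale 1 A = A"
  by (simp add: vec_eq_iff)

lemma cmat_scale_zero_right [simp]: "cmat_scale c 0 = 0"
  by (simp add: vec_eq_iff)

lemma cmat_scale_zero_left [simp]: "cmat_scale 0 A = 0"
  by (simp add: vec_eq_iff)

lemma cmat_scale_add_right: "cmat_scale c (A + B) = cmat_scale c A + cmat_scale c B"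
  by (simp add: vec_eq_iff distrib_left)

lemma cmat_scale_add_left: "cmat_scale (a + b) A = cmat_scale a A + cmat_scale b A"
  by (simp add: vec_eq_iff distrib_right)

lemma scaleR_eq_cmat_scale: "r *\<^sub>R A = cmat_scale (of_real r) A"
  by (simp add: vec_eq_iff) (simp add: scaleR_conv_of_real)

lemma matrix_mult_cmat_scale_left [simp]: "cmat_scale c A ** B = cmat_scale c (A ** B)"
  by (simp add: vec_eq_iff matrix_matrix_mult_def sum_distrib_left mult.assoc)

lemma matrix_mult_cmat_scale_right [simp]: "A ** cmat_scale c B = cmat_scale c (A ** B)"
  by (simp add: vec_eq_iff matrix_matrix_mult_def sum_distrib_left mult_ac)

lemma mtrace_cmat_scale [simp]: "mtrace (cmat_scale c A) = c * mtrace A"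
  by (simp add: mtrace_def sum_distrib_left)

lemma power2_norm_vec: "norm x ^ 2 = (\<Sum>i\<in>UNIV. norm (x $ i) ^ 2)"
  by (simp add: norm_vec_def L2_set_def sum_nonneg)

lemma norm_cmat_scale: "norm (cmat_scale c A) = norm c * norm A"
proof -
  have "norm (cmat_scale c A) ^ 2 = (norm c * norm A) ^ 2"
    by (simp add: power2_norm_vec norm_mult power_mult_distrib sum_distrib_left)
  then show ?thesis
    by simp
qed

text \<open>The norm on matrices is the Frobenius norm; it is submultiplicative by Cauchy-Schwarz applied to
  each entry of the product.\<close>
lemma norm_matrix_mult_le:
  fixes A :: "complex^'n^'m" and B :: "complex^'p^'n"
  shows "norm (A ** B) \<le> norm A * norm B"
proof -
  have entry: "norm ((A ** B) $ i $ k) ^ 2 \<le> norm (A $ i) ^ 2 * (\<Sum>l\<in>UNIV. norm (B $ l $ k) ^ 2)"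
    for i k
  proof -
    have "norm ((A ** B) $ i $ k) \<le> (\<Sum>l\<in>UNIV. \<bar>norm (A $ i $ l)\<bar> * \<bar>norm (B $ l $ k)\<bar>)"
      unfolding matrix_matrix_mult_def by (auto intro: order_trans[OF norm_sum] simp: norm_mult)
    also have "\<dots> \<le> L2_set (\<lambda>l. norm (A $ i $ l)) UNIV * L2_set (\<lambda>l. norm (B $ l $ k)) UNIV"
      by (rule L2_set_mult_ineq)
    finally have "norm ((A ** B) $ i $ k) ^ 2
        \<le> (L2_set (\<lambda>l. norm (A $ i $ l)) UNIV * L2_set (\<lambda>l. norm (B $ l $ k)) UNIV) ^ 2"
      by (rule power_mono) simp
    then show ?thesis
      by (simp add: power_mult_distrib L2_set_def sum_nonneg norm_vec_def)
  qed
  have "norm (A ** B) ^ 2 = (\<Sum>i\<in>UNIV. \<Sum>k\<in>UNIV. norm ((A ** B) $ i $ k) ^ 2)"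
    by (simp add: power2_norm_vec)
  also have "\<dots> \<le> (\<Sum>i\<in>UNIV. \<Sum>k\<in>UNIV. norm (A $ i) ^ 2 * (\<Sum>l\<in>UNIV. norm (B $ l $ k) ^ 2))"
    by (intro sum_mono entry)
  also have "\<dots> = norm A ^ 2 * (\<Sum>k\<in>UNIV. \<Sum>l\<in>UNIV. norm (B $ l $ k) ^ 2)"
    by (simp add: power2_norm_vec sum_product)
  also have "\<dots> = (norm A * norm B) ^ 2"
    by (subst sum.swap) (simp add: power2_norm_vec power_mult_distrib)
  finally show ?thesis
    by (rule power2_le_imp_le) simp
qed

lemma bounded_bilinear_matrix_mult:
  "bounded_bilinear ((**) :: complex^'n^'m \<Rightarrow> complex^'p^'n \<Rightarrow> complex^'p^'m)"
proof (rule bounded_bilinear.intro)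
  fix a a' :: "complex^'n^'m" and b b' :: "complex^'p^'n" and r :: real
  show "(a + a') ** b = a ** b + a' ** b"
    by (simp add: vec_eq_iff matrix_matrix_mult_def distrib_right sum.distrib)
  show "a ** (b + b') = a ** b + a ** b'"
    by (rule matrix_add_ldistrib)
  show "(r *\<^sub>R a) ** b = r *\<^sub>R (a ** b)" and "a ** (r *\<^sub>R b) = r *\<^sub>R (a ** b)"
    by (simp_all add: scaleR_eq_cmat_scale)
  show "\<exists>K. \<forall>(a :: complex^'n^'m) (b :: complex^'p^'n). norm (a ** b) \<le> norm a * norm b * K"
    by (intro exI[of _ 1] allI) (simp add: norm_matrix_mult_le)
qed

lemma bounded_linear_matrix_mult_left:
  "bounded_linear (\<lambda>X :: complex^'p^'n. (A :: complex^'n^'m) ** X)"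
  by (rule bounded_bilinear.bounded_linear_right[OF bounded_bilinear_matrix_mult])

lemma bounded_linear_matrix_mult_right:
  "bounded_linear (\<lambda>X :: complex^'n^'m. X ** (A :: complex^'p^'n))"
  by (rule bounded_bilinear.bounded_linear_left[OF bounded_bilinear_matrix_mult])

lemma norm_mtrace_le: "norm (mtrace A) \<le> real CARD('n) * norm (A :: complex^'n^'n)"
proof -
  have "norm (A $ i $ i) \<le> norm A" for i
    using Finite_Cartesian_Product.norm_nth_le[of "A $ i" i] Finite_Cartesian_Product.norm_nth_le[of A i] by linarith
  then have "norm (mtrace A) \<le> (\<Sum>i\<in>(UNIV::'n set). norm A)"
    unfolding mtrace_def by (intro order_trans[OF norm_sum] sum_mono)
  then show ?thesis
    by simp
qed

lemma bounded_linear_mtrace: "bounded_linear (mtrace :: complex^'n^'n \<Rightarrow> complex)"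
proof (rule bounded_linear_intro[where K = "real CARD('n)"])
  show "norm (mtrace A) \<le> norm A * real CARD('n)" for A :: "complex^'n^'n"
    using norm_mtrace_le[of A] by (simp add: mult.commute)
qed (simp_all add: mtrace_def sum.distrib scaleR_sum_right)

lemma mtrace_matrix_mult_commute: "mtrace (A ** B) = mtrace (B ** A)"
  by (simp add: mtrace_def matrix_matrix_mult_def) (subst sum.swap, simp add: mult.commute)

lemma mtrace_sum: "mtrace (sum f S) = (\<Sum>x\<in>S. mtrace (f x))"
  by (simp add: mtrace_def) (rule sum.swap)

lemma matrix_mult_sum_right: "A ** sum f S = (\<Sum>x\<in>S. A ** f x)"
  by (induction S rule: infinite_finite_induct) (auto simp: matrix_add_ldistrib)

lemma matrix_mult_sum_left: "sum f S ** A = (\<Sum>x\<in>S. f x ** A)"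
  by (induction S rule: infinite_finite_induct) (auto simp: vec_eq_iff matrix_matrix_mult_def distrib_right sum.distrib)

lemma cnj_mtrace: "cnj (mtrace A) = mtrace (adjoint A)"
  by (simp add: mtrace_def adjoint_def)

lemma adjoint_matrix_mult: "adjoint (A ** B) = adjoint B ** adjoint A"
  by (simp add: adjoint_def vec_eq_iff matrix_matrix_mult_def mult.commute)

lemma adjoint_mat_1: "adjoint (mat 1) = mat 1"
  by (simp add: adjoint_def vec_eq_iff mat_def)

lemma mpow_Suc_right: "mpow A (Suc k) = mpow A k ** A"
  by (induction k) (auto simp: matrix_mul_assoc)

lemma mpow_add: "mpow A (p + q) = mpow A p ** mpow A q"
  by (induction p) (auto simp: matrix_mul_assoc)

lemma mpow_cmat_scale: "mpow (cmat_scale c A) k = cmat_scale (c ^ k) (mpow A k)"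
  by (induction k) (auto simp: mult.commute)

lemma norm_mpow_le: "norm (mpow A k) \<le> norm (mat 1 :: complex^'n^'n) * norm (A :: complex^'n^'n) ^ k"
proof (induction k)
  case (Suc k)
  have "norm (mpow A (Suc k)) \<le> norm A * norm (mpow A k)"
    using norm_matrix_mult_le by simp
  also have "\<dots> \<le> norm A * (norm (mat 1 :: complex^'n^'n) * norm A ^ k)"
    by (intro mult_left_mono Suc.IH) simp
  finally show ?case
    by (simp add: mult_ac)
qed simp

lemma adjoint_mpow: "hermitian A \<Longrightarrow> adjoint (mpow A k) = mpow A k"
  unfolding hermitian_def
  by (induction k) (auto simp: adjoint_mat_1 adjoint_matrix_mult mpow_Suc_right[symmetric])

lemma cmat_scale_sum_left: "cmat_scale (sum f S) A = (\<Sum>x\<in>S. cmat_scale (f x) A)"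
  by (simp add: vec_eq_iff sum_distrib_right)

section \<open>Matrix exponential series\<close>

lemma sums_vecI: "(\<And>i. (\<lambda>n. f n $ i) sums (l $ i)) \<Longrightarrow> f sums l"
  unfolding sums_def by (intro vec_tendstoI) simp

lemma sums_vec_nth:
  fixes f :: "nat \<Rightarrow> 'a::real_normed_vector^'n"
  shows "f sums l \<Longrightarrow> (\<lambda>n. f n $ i) sums (l $ i)"
  using bounded_linear.sums[OF bounded_linear_vec_nth] .

lemma Cauchy_product_sums_matrix:
  fixes a :: "nat \<Rightarrow> complex^'n^'m" and b :: "nat \<Rightarrow> complex^'p^'n"
  assumes a: "summable (\<lambda>k. norm (a k))" and b: "summable (\<lambda>k. norm (b k))"
  shows "(\<lambda>k. \<Sum>i\<le>k. a i ** b (k - i)) sums (suminf a ** suminf b)"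
proof (intro sums_vecI)
  fix r c
  have norm_entry: "summable (\<lambda>k. norm (x k $ i $ j))" if "summable (\<lambda>k. norm (x k))"
    for x :: "nat \<Rightarrow> complex^'q^'o" and i j
  proof (rule summable_comparison_test'[OF that])
    show "norm (norm (x k $ i $ j)) \<le> norm (x k)" for k
      using Finite_Cartesian_Product.norm_nth_le[of "x k $ i" j]
        Finite_Cartesian_Product.norm_nth_le[of "x k" i] by simp
  qed
  have suminf_entry: "(\<Sum>k. x k $ i $ j) = suminf x $ i $ j" if "summable (\<lambda>k. norm (x k))"
    for x :: "nat \<Rightarrow> complex^'q^'o" and i j
    using sums_vec_nth[OF sums_vec_nth[OF summable_sums[OF summable_norm_cancel[OF that]]]]
    by (simp add: sums_iff)
  have "(\<lambda>k. \<Sum>i\<le>k. a i $ r $ l * b (k - i) $ l $ c) sums (suminf a $ r $ l * suminf b $ l $ c)" for l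
    using Cauchy_product_sums[OF norm_entry[OF a] norm_entry[OF b]]
    by (simp add: suminf_entry[OF a] suminf_entry[OF b])
  then have "(\<lambda>k. \<Sum>l\<in>UNIV. \<Sum>i\<le>k. a i $ r $ l * b (k - i) $ l $ c)
      sums (\<Sum>l\<in>UNIV. suminf a $ r $ l * suminf b $ l $ c)"
    by (rule sums_sum)
  moreover have "(\<Sum>i\<le>k. a i ** b (k - i)) $ r $ c = (\<Sum>l\<in>UNIV. \<Sum>i\<le>k. a i $ r $ l * b (k - i) $ l $ c)" for k
    by (simp add: matrix_matrix_mult_def) (rule sum.swap)
  ultimately show "(\<lambda>k. (\<Sum>i\<le>k. a i ** b (k - i)) $ r $ c) sums ((suminf a ** suminf b) $ r $ c)"
    by (simp add: matrix_matrix_mult_def)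
qed

lemma summable_norm_mexp_series:
  "summable (\<lambda>k. norm ((1 / fact k) *\<^sub>R mpow (A :: complex^'n^'n) k))"
proof (rule summable_comparison_test')
  show "summable (\<lambda>k. norm (mat 1 :: complex^'n^'n) * (inverse (fact k) * norm A ^ k))"
    by (intro summable_mult summable_exp)
  show "norm (norm ((1 / fact k) *\<^sub>R mpow A k))
      \<le> norm (mat 1 :: complex^'n^'n) * (inverse (fact k) * norm A ^ k)" for k
    using norm_mpow_le[of A k] by (simp add: divide_simps mult.commute)
qed

lemma mexp_sums: "(\<lambda>k. (1 / fact k) *\<^sub>R mpow A k) sums mexp A"
  unfolding mexp_def
  by (rule summable_sums[OF summable_norm_cancel[OF summable_norm_mexp_series]])

lemma mexp_series_cmat_scale:
  "(1 / fact k) *\<^sub>R mpow (cmat_scale z H) k = cmat_scale (z ^ k / fact k) (mpow H k)"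
  by (simp add: mpow_cmat_scale scaleR_eq_cmat_scale)

lemma binomial_ring_div_fact:
  fixes a b :: "'a :: {real_normed_field, banach}"
  shows "(\<Sum>p\<le>m. a ^ p / fact p * (b ^ (m - p) / fact (m - p))) = (a + b) ^ m / fact m"
  using exp_series_add_commuting[of a b m] by (simp add: scaleR_conv_of_real mult_ac divide_inverse)

lemma mexp_cmat_scale_add:
  "mexp (cmat_scale a H) ** mexp (cmat_scale b H) = mexp (cmat_scale (a + b) H)"
proof -
  let ?E = "\<lambda>z k. (1 / fact k) *\<^sub>R mpow (cmat_scale z H) k"
  have "(\<lambda>m. \<Sum>p\<le>m. ?E a p ** ?E b (m - p)) sums (mexp (cmat_scale a H) ** mexp (cmat_scale b H))"
    unfolding mexp_def by (rule Cauchy_product_sums_matrix[OF summable_norm_mexp_series summable_norm_mexp_series])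
  moreover have "(\<Sum>p\<le>m. ?E a p ** ?E b (m - p)) = ?E (a + b) m" for m
  proof -
    have "?E a p ** ?E b (m - p) = cmat_scale (a ^ p / fact p * (b ^ (m - p) / fact (m - p))) (mpow H m)"
      if "p \<le> m" for p
      using that by (simp add: mexp_series_cmat_scale mpow_add[symmetric] mult.commute)
    then have "(\<Sum>p\<le>m. ?E a p ** ?E b (m - p))
        = cmat_scale (\<Sum>p\<le>m. a ^ p / fact p * (b ^ (m - p) / fact (m - p))) (mpow H m)"
      by (simp add: cmat_scale_sum_left)
    also have "(\<Sum>p\<le>m. a ^ p / fact p * (b ^ (m - p) / fact (m - p))) = (a + b) ^ m / fact m"
      by (rule binomial_ring_div_fact)
    finally show ?thesis
      by (simp add: mexp_series_cmat_scale)
  qed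
  ultimately have "?E (a + b) sums (mexp (cmat_scale a H) ** mexp (cmat_scale b H))"
    by simp
  then show ?thesis
    using mexp_sums sums_unique2 by blast
qed

section \<open>Mixed traces and the evolved trace series\<close>

definition mixed_trace ::
    "complex^'n^'n \<Rightarrow> complex^'n^'n \<Rightarrow> complex^'n^'n \<Rightarrow> nat \<Rightarrow> nat \<Rightarrow> complex" where
  "mixed_trace H K \<rho> p q = mtrace (K ** mpow H p ** \<rho> ** mpow H q)"

definition mixed_trace_sum ::
    "complex^'n^'n \<Rightarrow> complex^'n^'n \<Rightarrow> complex^'n^'n \<Rightarrow> nat \<Rightarrow> complex" where
  "mixed_trace_sum H K \<rho> m = (\<Sum>p\<le>m. mixed_trace H K \<rho> p (m - p))"

lemma mtrace_mexp_sandwich_sums: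
  "(\<lambda>m. \<Sum>p\<le>m. u ^ p / fact p * (v ^ (m - p) / fact (m - p)) * mixed_trace H K \<rho> p (m - p))
     sums mtrace (K ** mexp (cmat_scale u H) ** \<rho> ** mexp (cmat_scale v H))"
proof -
  let ?a = "\<lambda>p. (1 / fact p) *\<^sub>R mpow (cmat_scale u H) p"
  let ?b = "\<lambda>q. \<rho> ** ((1 / fact q) *\<^sub>R mpow (cmat_scale v H) q)"
  have b_sums: "?b sums (\<rho> ** mexp (cmat_scale v H))"
    by (rule bounded_linear.sums[OF bounded_linear_matrix_mult_left mexp_sums])
  have b_summable: "summable (\<lambda>q. norm (?b q))"
  proof (rule summable_comparison_test')
    show "summable (\<lambda>q. norm \<rho> * norm ((1 / fact q) *\<^sub>R mpow (cmat_scale v H) q))"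
      by (intro summable_mult summable_norm_mexp_series)
    show "norm (norm (?b q)) \<le> norm \<rho> * norm ((1 / fact q) *\<^sub>R mpow (cmat_scale v H) q)" for q
      using norm_matrix_mult_le[of \<rho> "(1 / fact q) *\<^sub>R mpow (cmat_scale v H) q"] by simp
  qed
  have "(\<lambda>m. \<Sum>p\<le>m. ?a p ** ?b (m - p)) sums (mexp (cmat_scale u H) ** (\<rho> ** mexp (cmat_scale v H)))"
    using Cauchy_product_sums_matrix[OF summable_norm_mexp_series b_summable]
    unfolding mexp_def[symmetric] sums_unique[OF b_sums, symmetric] .
  then have "(\<lambda>m. mtrace (K ** (\<Sum>p\<le>m. ?a p ** ?b (m - p))))
      sums mtrace (K ** (mexp (cmat_scale u H) ** (\<rho> ** mexp (cmat_scale v H))))"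
    by (rule bounded_linear.sums[OF bounded_linear_compose[OF bounded_linear_mtrace bounded_linear_matrix_mult_left]])
  moreover have "mtrace (K ** (\<Sum>p\<le>m. ?a p ** ?b (m - p)))
      = (\<Sum>p\<le>m. u ^ p / fact p * (v ^ (m - p) / fact (m - p)) * mixed_trace H K \<rho> p (m - p))" for m
    by (simp add: matrix_mult_sum_right mtrace_sum mixed_trace_def mexp_series_cmat_scale matrix_mul_assoc mult_ac)
  ultimately show ?thesis
    by (simp add: matrix_mul_assoc)
qed

lemma Re_of_real_mult: "Re (of_real r * z) = r * Re z"
  by simp

lemma mtrace_evolution_sums:
  "(\<lambda>m. (\<i> * of_real w) ^ m *
      (\<Sum>p\<le>m. of_real ((1 - s) ^ p / fact p * (s ^ (m - p) / fact (m - p))) * mixed_trace H K \<rho> p (m - p)))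
     sums mtrace (K ** mexp (cmat_scale (\<i> * of_real w) H) ** Uevol H (s * w) \<rho>)"
proof -
  define u where "u = \<i> * of_real ((1 - s) * w)"
  define v where "v = \<i> * of_real (s * w)"
  have "mexp (cmat_scale (\<i> * of_real w) H) ** mexp (cmat_scale (- \<i> * of_real (s * w)) H)
      = mexp (cmat_scale u H)"
    unfolding mexp_cmat_scale_add u_def by (simp add: algebra_simps)
  moreover have "K ** mexp (cmat_scale (\<i> * of_real w) H) ** Uevol H (s * w) \<rho>
      = K ** (mexp (cmat_scale (\<i> * of_real w) H) ** mexp (cmat_scale (- \<i> * of_real (s * w)) H))
          ** \<rho> ** mexp (cmat_scale v H)"
    by (simp add: Uevol_def v_def matrix_mul_assoc)
  ultimately have "K ** mexp (cmat_scale (\<i> * of_real w) H) ** Uevol H (s * w) \<rho>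
      = K ** mexp (cmat_scale u H) ** \<rho> ** mexp (cmat_scale v H)"
    by simp
  moreover have "u ^ p / fact p * (v ^ (m - p) / fact (m - p))
      = (\<i> * of_real w) ^ m * of_real ((1 - s) ^ p / fact p * (s ^ (m - p) / fact (m - p)))"
    if "p \<le> m" for p m
  proof -
    obtain q where "m = p + q"
      using \<open>p \<le> m\<close> by (auto simp: le_iff_add)
    then show ?thesis
      by (simp add: u_def v_def power_add power_mult_distrib)
  qed
  ultimately show ?thesis
    using mtrace_mexp_sandwich_sums[of u v H K \<rho>] by (simp add: sum_distrib_left mult.assoc)
qed

definition evolution_series_term ::
    "real \<Rightarrow> complex^'n^'n \<Rightarrow> complex^'n^'n \<Rightarrow> complex^'n^'n \<Rightarrow> nat \<Rightarrow> real \<times> real \<Rightarrow> real" where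
  "evolution_series_term c H K \<rho> m = (\<lambda>(t, s). (c * t) ^ m *
     (\<Sum>p\<le>m. (1 - s) ^ p / fact p * (s ^ (m - p) / fact (m - p)) * Re (\<i> ^ m * mixed_trace H K \<rho> p (m - p))))"

lemma evolution_series_term_sums:
  "(\<lambda>m. evolution_series_term c H K \<rho> m (t, s))
     sums Re (mtrace (K ** mexp (cmat_scale (\<i> * of_real (c * t)) H) ** Uevol H (s * (c * t)) \<rho>))"
proof -
  have "Re ((\<i> * of_real (c * t)) ^ m * (\<Sum>p\<le>m. of_real ((1 - s) ^ p / fact p * (s ^ (m - p) / fact (m - p)))
          * mixed_trace H K \<rho> p (m - p)))
      = evolution_series_term c H K \<rho> m (t, s)" for m
  proof -
    have "(\<i> * of_real (c * t)) ^ m * (\<Sum>p\<le>m. of_real ((1 - s) ^ p / fact p * (s ^ (m - p) / fact (m - p)))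
          * mixed_trace H K \<rho> p (m - p))
        = (\<Sum>p\<le>m. of_real ((c * t) ^ m * ((1 - s) ^ p / fact p * (s ^ (m - p) / fact (m - p))))
          * (\<i> ^ m * mixed_trace H K \<rho> p (m - p)))"
      by (simp add: power_mult_distrib sum_distrib_left mult_ac)
    then show ?thesis
      by (simp only: Re_sum Re_of_real_mult evolution_series_term_def prod.case sum_distrib_left mult.assoc)
  qed
  then show ?thesis
    using sums_Re[OF mtrace_evolution_sums[of "c * t" s H K \<rho>]] by simp
qed

lemma cnj_mixed_trace:
  assumes "hermitian H" "hermitian K" "hermitian \<rho>"
  shows "cnj (mixed_trace H K \<rho> p q) = mixed_trace H K \<rho> q p"
proof -
  have "cnj (mixed_trace H K \<rho> p q) = mtrace (mpow H q ** \<rho> ** mpow H p ** K)"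
    using assms adjoint_mpow[OF assms(1)]
    by (simp add: mixed_trace_def cnj_mtrace adjoint_matrix_mult hermitian_def matrix_mul_assoc)
  also have "\<dots> = mixed_trace H K \<rho> q p"
    unfolding mixed_trace_def by (subst mtrace_matrix_mult_commute) (simp add: matrix_mul_assoc)
  finally show ?thesis .
qed

lemma mixed_trace_sum_real:
  assumes "hermitian H" "hermitian K" "hermitian \<rho>"
  shows "of_real (Re (mixed_trace_sum H K \<rho> m)) = mixed_trace_sum H K \<rho> m"
proof -
  have "cnj (mixed_trace_sum H K \<rho> m) = (\<Sum>p\<le>m. mixed_trace H K \<rho> (m - p) p)"
    by (simp add: mixed_trace_sum_def cnj_mixed_trace[OF assms])
  also have "\<dots> = mixed_trace_sum H K \<rho> m"
    unfolding mixed_trace_sum_def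
    by (rule sum.reindex_bij_witness[of _ "\<lambda>p. m - p" "\<lambda>p. m - p"]) auto
  finally show ?thesis
    by (simp add: Reals_cnj_iff)
qed

lemma norm_mixed_trace_le:
  "norm (mixed_trace H K \<rho> p q)
     \<le> real CARD('n) * norm (mat 1 :: complex^'n^'n) ^ 2 * norm K * norm \<rho> * norm (H :: complex^'n^'n) ^ (p + q)"
proof -
  let ?c = "norm (mat 1 :: complex^'n^'n)"
  have "norm (K ** mpow H p ** \<rho> ** mpow H q) \<le> norm K * norm (mpow H p) * norm \<rho> * norm (mpow H q)"
    by (intro order_trans[OF norm_matrix_mult_le] mult_right_mono order_trans[OF norm_matrix_mult_le]
        mult_left_mono norm_matrix_mult_le) auto
  also have "\<dots> \<le> norm K * (?c * norm H ^ p) * norm \<rho> * (?c * norm H ^ q)"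
    by (intro mult_mono norm_mpow_le) auto
  finally have "norm (K ** mpow H p ** \<rho> ** mpow H q) \<le> ?c ^ 2 * norm K * norm \<rho> * norm H ^ (p + q)"
    by (simp add: power_add power2_eq_square mult_ac)
  then show ?thesis
    unfolding mixed_trace_def
    by (intro order_trans[OF norm_mtrace_le]) (simp add: mult.assoc mult_left_mono)
qed

section \<open>Differentiating the trace of the erf series\<close>

definition erf_coeff :: "nat \<Rightarrow> real" where
  "erf_coeff k = (-1) ^ k / (fact k * (2 * real k + 1))"

lemma abs_erf_coeff_le: "\<bar>erf_coeff k\<bar> \<le> inverse (fact k)"
proof -
  have "fact k \<le> fact k * (2 * real k + 1)"
    by simp
  then show ?thesis
    by (simp add: erf_coeff_def abs_mult inverse_eq_divide frac_le)
qed

lemma merf_sums: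
  fixes M :: "complex^'n^'n"
  shows "(\<lambda>k. (2 / sqrt pi * erf_coeff k) *\<^sub>R mpow M (2 * k + 1)) sums merf M"
proof -
  let ?c = "norm (mat 1 :: complex^'n^'n)"
  have "summable (\<lambda>k. norm (erf_coeff k *\<^sub>R mpow M (2 * k + 1)))"
  proof (rule summable_comparison_test')
    show "summable (\<lambda>k. ?c * norm M * (inverse (fact k) * (norm M ^ 2) ^ k))"
      by (intro summable_mult summable_exp)
    show "norm (norm (erf_coeff k *\<^sub>R mpow M (2 * k + 1)))
        \<le> ?c * norm M * (inverse (fact k) * (norm M ^ 2) ^ k)" for k
    proof -
      have "norm (erf_coeff k *\<^sub>R mpow M (2 * k + 1)) \<le> inverse (fact k) * (?c * norm M ^ (2 * k + 1))"
        unfolding norm_scaleR by (intro mult_mono abs_erf_coeff_le norm_mpow_le) auto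
      also have "\<dots> = ?c * norm M * (inverse (fact k) * (norm M ^ 2) ^ k)"
        unfolding power_add power_mult by (simp add: mult_ac)
      finally show ?thesis
        by simp
    qed
  qed
  then have "(\<lambda>k. erf_coeff k *\<^sub>R mpow M (2 * k + 1)) sums (\<Sum>k. erf_coeff k *\<^sub>R mpow M (2 * k + 1))"
    by (rule summable_sums[OF summable_norm_cancel])
  from sums_scaleR_right[OF this, of "2 / sqrt pi"] show ?thesis
    by (simp add: merf_def erf_coeff_def)
qed

lemma mtrace_merf_sums:
  "(\<lambda>k. of_real (2 / sqrt pi * erf_coeff k) * mtrace (mpow M (2 * k + 1) ** \<rho>)) sums mtrace (merf M ** \<rho>)"
  using bounded_linear.sums[OF bounded_linear_compose[OF bounded_linear_mtrace
      bounded_linear_matrix_mult_right] merf_sums]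
  by (simp add: scaleR_eq_cmat_scale)

definition mpow_deriv :: "complex^'n^'n \<Rightarrow> complex^'n^'n \<Rightarrow> nat \<Rightarrow> complex^'n^'n" where
  "mpow_deriv A C m = (\<Sum>k<m. mpow A k ** C ** mpow A (m - 1 - k))"

lemma mpow_deriv_Suc: "mpow_deriv A C (Suc m) = C ** mpow A m + A ** mpow_deriv A C m"
proof -
  have "mpow_deriv A C (Suc m) = C ** mpow A m + (\<Sum>k<m. mpow A (Suc k) ** C ** mpow A (m - 1 - k))"
    unfolding mpow_deriv_def by (subst sum.lessThan_Suc_shift) simp
  then show ?thesis
    by (simp add: mpow_deriv_def matrix_mult_sum_right matrix_mul_assoc)
qed

lemma bounded_linear_cmat_scale_left: "bounded_linear (\<lambda>h. cmat_scale h C)"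
proof (rule bounded_linear_intro[where K = "norm C"])
  show "norm (cmat_scale h C) \<le> norm h * norm C" for h
    by (simp add: norm_cmat_scale)
  show "cmat_scale (r *\<^sub>R h) C = r *\<^sub>R cmat_scale h C" for r h
    by (simp add: scaleR_eq_cmat_scale) (simp add: vec_eq_iff scaleR_conv_of_real)
qed (rule cmat_scale_add_left)

lemma has_derivative_mpow_line:
  "((\<lambda>z. mpow (B + cmat_scale z C) m) has_derivative
      (\<lambda>h. cmat_scale h (mpow_deriv (B + cmat_scale z C) C m))) (at z)"
proof (induction m)
  case 0
  show ?case
    by (simp add: mpow_deriv_def)
next
  case (Suc m)
  have line: "((\<lambda>z. B + cmat_scale z C) has_derivative (\<lambda>h. cmat_scale h C)) (at z)"
    using has_derivative_add[OF has_derivative_const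
        bounded_linear_imp_has_derivative[OF bounded_linear_cmat_scale_left]]
    by simp
  show ?case
    using bounded_bilinear.FDERIV[OF bounded_bilinear_matrix_mult line Suc.IH]
    by (simp add: mpow_deriv_Suc cmat_scale_add_right add.commute)
qed

lemma norm_mpow_deriv_le:
  "norm (mpow_deriv A C (Suc m))
     \<le> real (Suc m) * norm (mat 1 :: complex^'n^'n) ^ 2 * norm C * norm (A :: complex^'n^'n) ^ m"
proof -
  let ?c = "norm (mat 1 :: complex^'n^'n)"
  have "norm (mpow A k ** C ** mpow A (m - k)) \<le> ?c ^ 2 * norm C * norm A ^ m" if "k \<le> m" for k
  proof -
    have "norm (mpow A k ** C ** mpow A (m - k)) \<le> norm (mpow A k) * norm C * norm (mpow A (m - k))"
      by (intro order_trans[OF norm_matrix_mult_le] mult_right_mono norm_matrix_mult_le) auto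
    also have "\<dots> \<le> (?c * norm A ^ k) * norm C * (?c * norm A ^ (m - k))"
      by (intro mult_mono norm_mpow_le) auto
    also have "\<dots> = ?c ^ 2 * norm C * norm A ^ (k + (m - k))"
      by (simp add: power_add power2_eq_square mult_ac)
    finally show ?thesis
      using that by simp
  qed
  then have "norm (mpow_deriv A C (Suc m)) \<le> (\<Sum>k<Suc m. ?c ^ 2 * norm C * norm A ^ m)"
    unfolding mpow_deriv_def by (intro order_trans[OF norm_sum] sum_mono) auto
  then show ?thesis
    by simp
qed

lemma mtrace_mpow_deriv_cmat_scale:
  "mtrace (mpow_deriv (cmat_scale a H) (cmat_scale a K) (Suc m) ** \<rho>) = a ^ Suc m * mixed_trace_sum H K \<rho> m"
proof -
  have "mpow (cmat_scale a H) k ** cmat_scale a K ** mpow (cmat_scale a H) (m - k)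
      = cmat_scale (a ^ Suc m) (mpow H k ** K ** mpow H (m - k))" if "k \<le> m" for k
  proof -
    obtain q where "m = k + q"
      using \<open>k \<le> m\<close> by (auto simp: le_iff_add)
    then show ?thesis
      by (simp add: mpow_cmat_scale power_add mult_ac)
  qed
  then have "mpow_deriv (cmat_scale a H) (cmat_scale a K) (Suc m)
      = (\<Sum>k\<le>m. cmat_scale (a ^ Suc m) (mpow H k ** K ** mpow H (m - k)))"
    unfolding mpow_deriv_def lessThan_Suc_atMost by (intro sum.cong) auto
  moreover have "mtrace (mpow H k ** K ** mpow H (m - k) ** \<rho>) = mixed_trace H K \<rho> (m - k) k" for k
    using mtrace_matrix_mult_commute[of "mpow H k" "K ** mpow H (m - k) ** \<rho>"]
    by (simp add: mixed_trace_def matrix_mul_assoc)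
  moreover have "(\<Sum>k\<le>m. mixed_trace H K \<rho> (m - k) k) = mixed_trace_sum H K \<rho> m"
    unfolding mixed_trace_sum_def
    by (rule sum.reindex_bij_witness[of _ "\<lambda>p. m - p" "\<lambda>p. m - p"]) auto
  ultimately show ?thesis
    by (simp add: matrix_mult_sum_left mtrace_sum flip: sum_distrib_left)
qed

lemma has_field_derivative_mtrace_mpow_line:
  "((\<lambda>z. mtrace (mpow (B + cmat_scale z C) m ** \<rho>)) has_field_derivative
      mtrace (mpow_deriv (B + cmat_scale z C) C m ** \<rho>)) (at z)"
  unfolding has_field_derivative_def
  using bounded_linear.has_derivative[OF bounded_linear_compose[OF bounded_linear_mtrace
      bounded_linear_matrix_mult_right] has_derivative_mpow_line]
  by (rule has_derivative_eq_rhs) (simp add: fun_eq_iff mult.commute)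

lemma norm_erf_deriv_term_le:
  fixes A C \<rho> :: "complex^'n^'n"
  assumes "norm A \<le> Q"
  shows "norm (of_real (2 / sqrt pi * erf_coeff k) * mtrace (mpow_deriv A C (2 * k + 1) ** \<rho>))
    \<le> 2 / sqrt pi * real CARD('n) * (2 * norm (mat 1 :: complex^'n^'n) ^ 2 * norm C * norm \<rho>)
        * (inverse (fact k) * (4 * Q ^ 2) ^ k)"
proof -
  let ?c = "norm (mat 1 :: complex^'n^'n)" and ?D = "mpow_deriv A C (2 * k + 1)"
  have "Suc (2 * k) \<le> 2 * 4 ^ k"
    using less_exp[of "Suc (2 * k)"] by (simp add: power_mult)
  then have "real (Suc (2 * k)) \<le> real (2 * 4 ^ k)"
    by (simp only: of_nat_le_iff)
  then have growth: "real (Suc (2 * k)) \<le> 2 * 4 ^ k"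
    by simp
  have "norm ?D \<le> real (Suc (2 * k)) * ?c ^ 2 * norm C * norm A ^ (2 * k)"
    using norm_mpow_deriv_le[of A C "2 * k"] by simp
  also have "\<dots> \<le> (2 * 4 ^ k) * ?c ^ 2 * norm C * Q ^ (2 * k)"
    by (intro mult_mono power_mono growth assms) auto
  also have "\<dots> = 2 * ?c ^ 2 * norm C * (4 * Q ^ 2) ^ k"
    unfolding power_mult[of Q 2 k] power_mult_distrib by (simp only: mult_ac)
  finally have D: "norm ?D \<le> 2 * ?c ^ 2 * norm C * (4 * Q ^ 2) ^ k" .
  have "norm (complex_of_real (2 / sqrt pi * erf_coeff k)) \<le> 2 / sqrt pi * inverse (fact k)"
    using mult_left_mono[OF abs_erf_coeff_le[of k], of "2 / sqrt pi"]
    by (simp only: norm_of_real) (simp add: abs_mult)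
  moreover have "norm (mtrace (?D ** \<rho>)) \<le> real CARD('n) * (norm ?D * norm \<rho>)"
    by (rule order_trans[OF norm_mtrace_le mult_left_mono[OF norm_matrix_mult_le]]) simp
  ultimately have "norm (of_real (2 / sqrt pi * erf_coeff k) * mtrace (?D ** \<rho>))
      \<le> 2 / sqrt pi * inverse (fact k) * (real CARD('n) * (norm ?D * norm \<rho>))"
    unfolding norm_mult by (rule mult_mono) auto
  also have "\<dots> \<le> 2 / sqrt pi * inverse (fact k) * (real CARD('n) * (2 * ?c ^ 2 * norm C * (4 * Q ^ 2) ^ k * norm \<rho>))"
    by (intro mult_left_mono mult_right_mono D) auto
  finally show ?thesis
    by (simp add: mult_ac)
qed

text \<open>Termwise differentiation of the erf series is justified by the Weierstrass M-test on the unit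
  disc of directions, where \<open>\<parallel>B + z C\<parallel> \<le> \<parallel>B\<parallel> + \<parallel>C\<parallel>\<close>.\<close>
lemma has_field_derivative_mtrace_merf_line:
  fixes B C \<rho> :: "complex^'n^'n"
  shows "((\<lambda>z. mtrace (merf (B + cmat_scale z C) ** \<rho>)) has_field_derivative
      (\<Sum>k. of_real (2 / sqrt pi * erf_coeff k) * mtrace (mpow_deriv B C (2 * k + 1) ** \<rho>))) (at 0)"
proof -
  define f where "f k z = of_real (2 / sqrt pi * erf_coeff k) * mtrace (mpow (B + cmat_scale z C) (2 * k + 1) ** \<rho>)"
    for k z
  define f' where "f' k z = of_real (2 / sqrt pi * erf_coeff k)
      * mtrace (mpow_deriv (B + cmat_scale z C) C (2 * k + 1) ** \<rho>)" for k z
  define Q where "Q = norm B + norm C"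
  have deriv: "(f k has_field_derivative f' k z) (at z within ball 0 1)" for k z
    unfolding f_def f'_def
    by (rule has_field_derivative_at_within, rule DERIV_cmult, rule has_field_derivative_mtrace_mpow_line)
  have BC: "norm (B + cmat_scale z C) \<le> Q" if "z \<in> ball 0 1" for z
  proof -
    have "norm (B + cmat_scale z C) \<le> norm B + norm z * norm C"
      by (rule order_trans[OF norm_triangle_ineq]) (simp add: norm_cmat_scale)
    also have "\<dots> \<le> Q"
      using that by (simp add: Q_def mult_left_le_one_le)
    finally show ?thesis .
  qed
  have unif: "uniformly_convergent_on (ball 0 1) (\<lambda>n z. \<Sum>k<n. f' k z)"
    unfolding f'_def
    by (rule Weierstrass_m_test'[OF norm_erf_deriv_term_le[OF BC]]) (assumption, intro summable_mult summable_exp)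
  have sums: "(\<lambda>k. f k z) sums mtrace (merf (B + cmat_scale z C) ** \<rho>)" for z
    unfolding f_def by (rule mtrace_merf_sums)
  have "((\<lambda>z. \<Sum>k. f k z) has_field_derivative (\<Sum>k. f' k 0)) (at 0)"
    by (rule has_field_derivative_series'(2)[OF convex_ball deriv unif, of 0])
       (auto simp: sums_summable[OF sums])
  moreover have "(\<lambda>z. \<Sum>k. f k z) = (\<lambda>z. mtrace (merf (B + cmat_scale z C) ** \<rho>))"
    using sums by (simp add: fun_eq_iff sums_iff)
  ultimately show ?thesis
    by (simp add: f'_def)
qed

lemma has_vector_derivative_mtrace_merf_line:
  fixes B C \<rho> :: "complex^'n^'n"
  shows "((\<lambda>x. mtrace (merf (B + cmat_scale (of_real (x - x0)) C) ** \<rho>)) has_vector_derivative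
      (\<Sum>k. of_real (2 / sqrt pi * erf_coeff k) * mtrace (mpow_deriv B C (2 * k + 1) ** \<rho>))) (at x0)"
proof -
  have "((\<lambda>x. complex_of_real (x - x0)) has_vector_derivative 1) (at x0)"
    by (auto intro!: derivative_eq_intros)
  from field_vector_diff_chain_at[OF this] show ?thesis
    using has_field_derivative_mtrace_merf_line[of B C \<rho>] by (simp add: o_def)
qed

section \<open>Gaussian and uniform integrals\<close>

abbreviation unit_uniform_measure :: "real measure" where
  "unit_uniform_measure \<equiv> uniform_measure lborel {0..1}"

lemma prob_space_unit_uniform_measure: "prob_space unit_uniform_measure"
  by (rule prob_space_uniform_measure) simp_all

lemma pair_sigma_finite_std_normal_unit_uniform:
  "pair_sigma_finite std_normal_distribution unit_uniform_measure"
  by (intro pair_sigma_finite.intro prob_space_imp_sigma_finite prob_space_normal_density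
      prob_space_unit_uniform_measure) simp

lemma (in pair_sigma_finite)
  fixes f g :: "_ \<Rightarrow> real"
  assumes f: "integrable M1 f" and g: "integrable M2 g"
  shows integrable_mult_fst_snd: "integrable (M1 \<Otimes>\<^sub>M M2) (\<lambda>z. f (fst z) * g (snd z))"
    and integral_mult_fst_snd: "integral\<^sup>L (M1 \<Otimes>\<^sub>M M2) (\<lambda>z. f (fst z) * g (snd z)) = integral\<^sup>L M1 f * integral\<^sup>L M2 g"
proof -
  have [measurable]: "f \<in> borel_measurable M1" "g \<in> borel_measurable M2"
    using f g by auto
  show fg: "integrable (M1 \<Otimes>\<^sub>M M2) (\<lambda>z. f (fst z) * g (snd z))"
  proof (rule Fubini_integrable)
    have "integrable M1 (\<lambda>x. norm (f x) * (\<integral>y. norm (g y) \<partial>M2))"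
      using f by (intro integrable_mult_left) auto
    then show "integrable M1 (\<lambda>x. \<integral>y. norm (f (fst (x, y)) * g (snd (x, y))) \<partial>M2)"
      by (simp add: abs_mult)
    show "AE x in M1. integrable M2 (\<lambda>y. f (fst (x, y)) * g (snd (x, y)))"
      using g by (auto intro!: integrable_mult_right)
  qed measurable
  show "integral\<^sup>L (M1 \<Otimes>\<^sub>M M2) (\<lambda>z. f (fst z) * g (snd z)) = integral\<^sup>L M1 f * integral\<^sup>L M2 g"
    using integral_fst'[OF fg] by simp
qed

text \<open>Completing the square, \<open>a \<bar>t\<bar> - t\<^sup>2/2 \<le> a\<^sup>2 - t\<^sup>2/4\<close>, dominates the integrand
  by a multiple of the centred normal density with variance 2.\<close>
lemma integrable_std_normal_distribution_exp_abs: "integrable std_normal_distribution (\<lambda>t. exp (a * \<bar>t\<bar>))"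
proof -
  have bound: "std_normal_density t * exp (a * \<bar>t\<bar>) \<le> exp (a\<^sup>2) * sqrt 2 * normal_density 0 (sqrt 2) t"
    for t
  proof -
    have "- t\<^sup>2 / 2 + a * \<bar>t\<bar> \<le> a\<^sup>2 + - t\<^sup>2 / 4"
      using zero_le_power2[of "\<bar>t\<bar> / 2 - a"] by (simp add: power2_eq_square algebra_simps)
    then have "exp (- t\<^sup>2 / 2) * exp (a * \<bar>t\<bar>) \<le> exp (a\<^sup>2) * exp (- t\<^sup>2 / 4)"
      by (simp flip: exp_add)
    moreover have "sqrt 2 * normal_density 0 (sqrt 2) t = exp (- t\<^sup>2 / 4) / sqrt (2 * pi)"
      by (simp add: normal_density_def real_sqrt_mult field_simps)
    ultimately show ?thesis
      by (simp add: std_normal_density_def divide_right_mono mult.assoc)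
  qed
  have "integrable lborel (\<lambda>t. exp (a\<^sup>2) * sqrt 2 * normal_density 0 (sqrt 2) t)"
    by (intro integrable_mult_right integrable_normal_density) simp
  then have "integrable lborel (\<lambda>t. std_normal_density t * exp (a * \<bar>t\<bar>))"
  proof (rule Bochner_Integration.integrable_bound)
    show "AE t in lborel. norm (std_normal_density t * exp (a * \<bar>t\<bar>))
        \<le> norm (exp (a\<^sup>2) * sqrt 2 * normal_density 0 (sqrt 2) t)"
      using bound by (intro AE_I2) (simp add: abs_mult normal_density_nonneg)
  qed simp
  then show ?thesis
    by (subst integrable_density) auto
qed

lemma
  shows integrable_unit_uniform_measure_beta: "integrable unit_uniform_measure (\<lambda>s. (1 - s) ^ p * s ^ q)"
    and integral_unit_uniform_measure_beta: "integral\<^sup>L unit_uniform_measure (\<lambda>s. (1 - s) ^ p * s ^ q) = fact p * fact q / fact (p + q + 1)"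
proof -
  have uniform: "unit_uniform_measure = density lborel (\<lambda>s. ennreal (indicator {0..1} s))"
    by (simp add: uniform_measure_def ennreal_indicator divide_ennreal_def)
  have int: "set_integrable lborel {0..1::real} (\<lambda>s. (1 - s) ^ p * s ^ q)"
    unfolding set_integrable_def by (rule borel_integrable_compact) (auto intro!: continuous_intros)
  then show "integrable unit_uniform_measure (\<lambda>s. (1 - s) ^ p * s ^ q)"
    unfolding uniform set_integrable_def by (subst integrable_density) (auto simp: mult.commute)
  have "((\<lambda>s. s powr (real q + 1 - 1) * (1 - s) powr (real p + 1 - 1)) has_integral
      Beta (real q + 1) (real p + 1)) {0..1}"
    by (rule has_integral_Beta_real) auto
  moreover have "Beta (real q + 1) (real p + 1) = fact p * fact q / fact (p + q + 1)"
  proof -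
    have "Gamma (real n + 1) = fact n" for n
      using Gamma_fact[of n] by (simp add: add.commute)
    from this[of p] this[of q] this[of "p + q + 1"] show ?thesis
      by (simp add: Beta_def add_ac)
  qed
  ultimately have beta: "((\<lambda>s. s powr q * (1 - s) powr p) has_integral (fact p * fact q / fact (p + q + 1))) {0..1}"
    by simp
  have eq: "(1 - s) ^ p * s ^ q = s powr q * (1 - s) powr p" if "s \<in> {0..1} - {0, 1}" for s :: real
    using that by (simp add: powr_realpow)
  have "((\<lambda>s. (1 - s) ^ p * s ^ q) has_integral (fact p * fact q / fact (p + q + 1))) {0..1::real}"
    by (rule has_integral_spike_finite[of "{0, 1}", OF _ eq beta]) simp
  moreover have "integral\<^sup>L unit_uniform_measure (\<lambda>s. (1 - s) ^ p * s ^ q)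
      = set_lebesgue_integral lborel {0..1} (\<lambda>s. (1 - s) ^ p * s ^ q)"
    unfolding uniform set_lebesgue_integral_def by (subst integral_density) auto
  ultimately show "integral\<^sup>L unit_uniform_measure (\<lambda>s. (1 - s) ^ p * s ^ q)
      = fact p * fact q / fact (p + q + 1)"
    using set_borel_integral_eq_integral(2)[OF int] by (simp add: integral_unique)
qed

lemma sums_integral_dominated:
  fixes f :: "nat \<Rightarrow> 'a \<Rightarrow> 'b::{banach, second_countable_topology}"
  assumes f: "\<And>m. integrable M (f m)" and F: "\<And>x. (\<lambda>m. f m x) sums F x"
    and w: "integrable M w" and bound: "\<And>N. AE x in M. norm (\<Sum>m<N. f m x) \<le> w x"
  shows "(\<lambda>m. integral\<^sup>L M (f m)) sums integral\<^sup>L M F"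
proof -
  have partial: "integrable M (\<lambda>x. \<Sum>m<N. f m x)" for N
    using f by (rule Bochner_Integration.integrable_sum)
  have "(\<lambda>N. integral\<^sup>L M (\<lambda>x. \<Sum>m<N. f m x)) \<longlonglongrightarrow> integral\<^sup>L M F"
  proof (rule integral_dominated_convergence[OF _ _ w _ bound])
    show "F \<in> borel_measurable M"
      using partial F unfolding sums_def by (rule borel_measurable_LIMSEQ_metric[OF borel_measurable_integrable])
    show "(\<lambda>x. \<Sum>m<N. f m x) \<in> borel_measurable M" for N
      using partial by (rule borel_measurable_integrable)
    show "AE x in M. (\<lambda>N. \<Sum>m<N. f m x) \<longlonglongrightarrow> F x"
      using F by (simp add: sums_def)
  qed
  moreover have "integral\<^sup>L M (\<lambda>x. \<Sum>m<N. f m x) = (\<Sum>m<N. integral\<^sup>L M (f m))" for N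
    using f by (rule Bochner_Integration.integral_sum)
  ultimately show ?thesis
    by (simp add: sums_def)
qed

lemma sum_power_div_fact_le_exp: "0 \<le> x \<Longrightarrow> (\<Sum>m<N. x ^ m / fact m) \<le> exp (x :: real)"
  using sum_le_suminf[OF summable_exp[of x], of "{..<N}"]
  by (simp add: exp_def divide_inverse_commute)

section \<open>Integrating the evolved trace series\<close>

lemma abs_evolution_series_term_le:
  assumes "s \<in> {0..1}"
  shows "\<bar>evolution_series_term c H K \<rho> m (t, s)\<bar>
    \<le> real CARD('n) * norm (mat 1 :: complex^'n^'n) ^ 2 * norm K * norm \<rho> * (\<bar>c * t\<bar> * norm (H :: complex^'n^'n)) ^ m / fact m"
proof -
  define B where "B = real CARD('n) * norm (mat 1 :: complex^'n^'n) ^ 2 * norm K * norm \<rho>"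
  define x where "x p = (1 - s) ^ p / fact p * (s ^ (m - p) / fact (m - p))" for p
  have x_nonneg: "0 \<le> x p" for p
    using assms by (simp add: x_def)
  have "\<bar>Re (\<i> ^ m * mixed_trace H K \<rho> p (m - p))\<bar> \<le> B * norm H ^ m" if "p \<le> m" for p
    using abs_Re_le_cmod[of "\<i> ^ m * mixed_trace H K \<rho> p (m - p)"] norm_mixed_trace_le[of H K \<rho> p "m - p"] that
    by (simp add: B_def norm_mult norm_power)
  then have "\<bar>\<Sum>p\<le>m. x p * Re (\<i> ^ m * mixed_trace H K \<rho> p (m - p))\<bar> \<le> (\<Sum>p\<le>m. x p * (B * norm H ^ m))"
    by (intro order_trans[OF sum_abs] sum_mono) (auto simp: abs_mult x_nonneg mult_left_mono)
  also have "\<dots> = (\<Sum>p\<le>m. x p) * (B * norm H ^ m)"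
    by (simp add: sum_distrib_right)
  also have "(\<Sum>p\<le>m. x p) = 1 / fact m"
    using binomial_ring_div_fact[of "1 - s" s m] by (simp add: x_def)
  finally have "\<bar>\<Sum>p\<le>m. x p * Re (\<i> ^ m * mixed_trace H K \<rho> p (m - p))\<bar> \<le> B * norm H ^ m / fact m"
    by simp
  moreover have "\<bar>(c * t) ^ m * S\<bar> \<le> B * (\<bar>c * t\<bar> * norm H) ^ m / fact m"
    if "\<bar>S\<bar> \<le> B * norm H ^ m / fact m" for S
    using mult_left_mono[OF that, of "\<bar>c * t\<bar> ^ m"] by (simp add: abs_mult power_abs power_mult_distrib mult_ac)
  ultimately show ?thesis
    unfolding evolution_series_term_def prod.case x_def[symmetric] B_def[symmetric] by blast
qed

lemma
  shows integrable_evolution_series_term: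
      "integrable (std_normal_distribution \<Otimes>\<^sub>M unit_uniform_measure) (evolution_series_term c H K \<rho> m)"
    and integral_evolution_series_term:
      "integral\<^sup>L (std_normal_distribution \<Otimes>\<^sub>M unit_uniform_measure) (evolution_series_term c H K \<rho> m)
         = c ^ m * integral\<^sup>L std_normal_distribution (\<lambda>t. t ^ m) / fact (Suc m) * Re (\<i> ^ m * mixed_trace_sum H K \<rho> m)"
proof -
  interpret pair_sigma_finite std_normal_distribution unit_uniform_measure
    by (rule pair_sigma_finite_std_normal_unit_uniform)
  define a where "a p = c ^ m * Re (\<i> ^ m * mixed_trace H K \<rho> p (m - p)) / (fact p * fact (m - p))" for p
  let ?g = "\<lambda>p z. fst z ^ m * ((1 - snd z) ^ p * snd z ^ (m - p))"
  have split: "evolution_series_term c H K \<rho> m = (\<lambda>z. \<Sum>p\<le>m. ?g p z * a p)"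
    by (simp add: evolution_series_term_def a_def fun_eq_iff sum_distrib_left power_mult_distrib mult_ac split: prod.split)
  have g: "integrable (std_normal_distribution \<Otimes>\<^sub>M unit_uniform_measure) (?g p)" for p
    by (rule integrable_mult_fst_snd[OF integrable_std_normal_distribution_moment
          integrable_unit_uniform_measure_beta])
  have integral_g: "integral\<^sup>L (std_normal_distribution \<Otimes>\<^sub>M unit_uniform_measure) (?g p)
      = integral\<^sup>L std_normal_distribution (\<lambda>t. t ^ m) * (fact p * fact (m - p) / fact (Suc m))" if "p \<le> m" for p
    using integral_mult_fst_snd[OF integrable_std_normal_distribution_moment
        integrable_unit_uniform_measure_beta, of m p "m - p"] that
    by (simp add: integral_unit_uniform_measure_beta)
  show "integrable (std_normal_distribution \<Otimes>\<^sub>M unit_uniform_measure) (evolution_series_term c H K \<rho> m)"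
    unfolding split by (intro Bochner_Integration.integrable_sum integrable_mult_left g)
  have "integral\<^sup>L (std_normal_distribution \<Otimes>\<^sub>M unit_uniform_measure) (evolution_series_term c H K \<rho> m)
      = (\<Sum>p\<le>m. integral\<^sup>L std_normal_distribution (\<lambda>t. t ^ m) * (fact p * fact (m - p) / fact (Suc m)) * a p)"
    unfolding split by (simp add: Bochner_Integration.integral_sum integrable_mult_left g integral_g)
  also have "\<dots> = c ^ m * integral\<^sup>L std_normal_distribution (\<lambda>t. t ^ m) / fact (Suc m)
      * (\<Sum>p\<le>m. Re (\<i> ^ m * mixed_trace H K \<rho> p (m - p)))"
    by (simp add: a_def sum_distrib_left mult_ac)
  finally show "integral\<^sup>L (std_normal_distribution \<Otimes>\<^sub>M unit_uniform_measure) (evolution_series_term c H K \<rho> m)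
      = c ^ m * integral\<^sup>L std_normal_distribution (\<lambda>t. t ^ m) / fact (Suc m) * Re (\<i> ^ m * mixed_trace_sum H K \<rho> m)"
    by (simp add: mixed_trace_sum_def sum_distrib_left Re_sum)
qed

lemma integral_evolution_series_term_odd:
  "integral\<^sup>L (std_normal_distribution \<Otimes>\<^sub>M unit_uniform_measure) (evolution_series_term c H K \<rho> (2 * k + 1)) = 0"
proof -
  have "integral\<^sup>L std_normal_distribution (\<lambda>t. t ^ (2 * k + 1)) = 0"
    by (rule integral_std_normal_distribution_moment_odd) simp
  then show ?thesis
    by (simp only: integral_evolution_series_term)
qed

lemma integral_evolution_series_term_even:
  "integral\<^sup>L (std_normal_distribution \<Otimes>\<^sub>M unit_uniform_measure) (evolution_series_term c H K \<rho> (2 * k))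
     = erf_coeff k * (c ^ 2 / 2) ^ k * Re (mixed_trace_sum H K \<rho> (2 * k))"
proof -
  define g where "g = mixed_trace_sum H K \<rho> (2 * k)"
  define F :: real where "F = fact (2 * k)"
  have c_power: "c ^ (2 * k) = (c ^ 2) ^ k" and i_power: "Re (\<i> ^ (2 * k) * g) = (-1) ^ k * Re g"
    by (simp_all add: power_mult)
  have fact_Suc_F: "fact (Suc (2 * k)) = (2 * real k + 1) * F"
    by (simp add: F_def fact_Suc)
  have cancel: "x * (F / (p * f)) / (q * F) * (s * r) = s / (f * q) * (x / p) * r"
    if "F \<noteq> 0" "p \<noteq> 0" "f \<noteq> 0" "q \<noteq> 0" for x F p f q s r :: real
    using that by (simp add: field_simps)
  show ?thesis
    unfolding integral_evolution_series_term std_normal_distribution_even_moments(1)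
      g_def[symmetric] F_def[symmetric] erf_coeff_def power_divide c_power i_power fact_Suc_F
    by (rule cancel) (simp_all add: F_def)
qed

lemma norm_sum_evolution_series_term_le:
  assumes "s \<in> {0..1}"
  shows "norm (\<Sum>m<N. evolution_series_term c H K \<rho> m (t, s))
    \<le> real CARD('n) * norm (mat 1 :: complex^'n^'n) ^ 2 * norm K * norm \<rho> * exp (\<bar>c\<bar> * norm (H :: complex^'n^'n) * \<bar>t\<bar>)"
proof -
  define B where "B = real CARD('n) * norm (mat 1 :: complex^'n^'n) ^ 2 * norm K * norm \<rho>"
  have "norm (\<Sum>m<N. evolution_series_term c H K \<rho> m (t, s)) \<le> (\<Sum>m<N. B * ((\<bar>c * t\<bar> * norm H) ^ m / fact m))"
    using abs_evolution_series_term_le[OF assms, of c H K \<rho>]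
    by (intro order_trans[OF norm_sum] sum_mono) (simp add: B_def)
  also have "\<dots> = B * (\<Sum>m<N. (\<bar>c * t\<bar> * norm H) ^ m / fact m)"
    by (simp add: sum_distrib_left)
  also have "\<dots> \<le> B * exp (\<bar>c * t\<bar> * norm H)"
    by (simp add: B_def mult_left_mono sum_power_div_fact_le_exp)
  finally show ?thesis
    by (simp add: B_def abs_mult mult_ac)
qed

lemma erf_series_sums_integral_evolution:
  fixes H K \<rho> :: "complex^'n^'n"
  shows "(\<lambda>k. erf_coeff k * (c ^ 2 / 2) ^ k * Re (mixed_trace_sum H K \<rho> (2 * k))) sums
    integral\<^sup>L (std_normal_distribution \<Otimes>\<^sub>M unit_uniform_measure)
      (\<lambda>(t, s). Re (mtrace (K ** mexp (cmat_scale (\<i> * of_real (c * t)) H) ** Uevol H (s * (c * t)) \<rho>)))"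
    (is "_ sums integral\<^sup>L ?M ?F")
proof -
  interpret pair_sigma_finite std_normal_distribution unit_uniform_measure
    by (rule pair_sigma_finite_std_normal_unit_uniform)
  define B where "B = real CARD('n) * norm (mat 1 :: complex^'n^'n) ^ 2 * norm K * norm \<rho>"
  define w where "w z = B * exp (\<bar>c\<bar> * norm H * \<bar>fst z\<bar>)" for z :: "real \<times> real"
  have "integrable ?M (\<lambda>z. B * exp (\<bar>c\<bar> * norm H * \<bar>fst z\<bar>) * 1)"
    using integrable_std_normal_distribution_exp_abs prob_space_unit_uniform_measure
    by (intro integrable_mult_fst_snd[of "\<lambda>t. B * exp (\<bar>c\<bar> * norm H * \<bar>t\<bar>)" "\<lambda>s. 1"])
       (auto intro: finite_measure.integrable_const prob_space.finite_measure)
  then have w: "integrable ?M w"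
    by (simp only: mult_1_right w_def[abs_def])
  have "AE z in ?M. snd z \<in> {0..1}"
  proof (rule AE_pair_measure)
    show "{z \<in> space ?M. snd z \<in> {0..1}} \<in> sets ?M"
      by measurable
    show "AE t in std_normal_distribution. AE s in unit_uniform_measure. snd (t, s) \<in> {0..1}"
      by (intro AE_I2 AE_uniform_measureI) auto
  qed
  then have bound: "AE z in ?M. norm (\<Sum>m<N. evolution_series_term c H K \<rho> m z) \<le> w z" for N
  proof eventually_elim
    case (elim z)
    then show ?case
      using norm_sum_evolution_series_term_le[where s = "snd z" and t = "fst z" and N = N]
      by (simp add: w_def B_def)
  qed
  have "(\<lambda>m. integral\<^sup>L ?M (evolution_series_term c H K \<rho> m)) sums integral\<^sup>L ?M ?F"
  proof (rule sums_integral_dominated[OF integrable_evolution_series_term _ w bound])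
    show "(\<lambda>m. evolution_series_term c H K \<rho> m z) sums ?F z" for z
      using evolution_series_term_sums[of c H K \<rho> "fst z" "snd z"] by (simp add: split_beta)
  qed
  moreover have "integral\<^sup>L ?M (evolution_series_term c H K \<rho> m) = 0" if "m \<notin> range (\<lambda>k. 2 * k)" for m
  proof -
    from that have "odd m"
      by (metis evenE rangeI)
    then show ?thesis
      by (metis oddE integral_evolution_series_term_odd)
  qed
  ultimately have "(\<lambda>k. integral\<^sup>L ?M (evolution_series_term c H K \<rho> (2 * k))) sums integral\<^sup>L ?M ?F"
    by (subst sums_mono_reindex) (simp_all add: strict_mono_def)
  then show ?thesis
    by (simp add: integral_evolution_series_term_even)
qed

section \<open>The derivative formula\<close>

lemma hermitian_Hsum:
  assumes "\<And>k. hermitian (Hs k)"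
  shows "hermitian (Hsum Hs \<theta>)"
proof -
  have "cnj (Hs k $ c $ r) = Hs k $ r $ c" for k r c
    using assms[of k] unfolding hermitian_def adjoint_def by (metis vec_lambda_beta)
  then show ?thesis
    by (simp add: hermitian_def adjoint_def Hsum_def vec_eq_iff)
qed

lemma Hsum_vec_upd:
  "Hsum Hs (vec_upd \<theta> j x) = Hsum Hs \<theta> + cmat_scale (of_real (x - \<theta> $ j)) (Hs j)"
proof -
  have "cmat_scale (of_real (vec_upd \<theta> j x $ k)) (Hs k)
      = cmat_scale (of_real (\<theta> $ k)) (Hs k) + (if k = j then cmat_scale (of_real (x - \<theta> $ j)) (Hs j) else 0)"
    for k
    by (simp add: vec_upd_def vec_eq_iff algebra_simps)
  then show ?thesis
    by (simp add: Hsum_def sum.distrib)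
qed

lemma erf_coeff_scaling:
  "2 / sqrt pi * (sqrt 2 / T) ^ (2 * k + 1) = 2 / T * sqrt (2 / pi) * ((2 / T) ^ 2 / 2) ^ k"
proof -
  have square: "(sqrt 2 / T) ^ 2 = (2 / T) ^ 2 / 2"
    by (simp add: power_divide)
  have "(sqrt 2 / T) ^ (2 * k + 1) = sqrt 2 / T * ((2 / T) ^ 2 / 2) ^ k"
    unfolding power_add power_mult square by simp
  moreover have "2 / sqrt pi * (sqrt 2 / T * y) = 2 / T * sqrt (2 / pi) * y" for y
    by (simp add: real_sqrt_divide mult_ac)
  ultimately show ?thesis
    by simp
qed

lemma has_vector_derivative_mtrace_merf_integral:
  fixes H K \<rho> :: "complex^'n^'n"
  assumes herm: "hermitian H" "hermitian K" "hermitian \<rho>"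
  shows "((\<lambda>x. mtrace (merf (cmat_scale (of_real (sqrt 2 / T)) (H + cmat_scale (of_real (x - x0)) K)) ** \<rho>))
    has_vector_derivative
      of_real (2 / T * sqrt (2 / pi) * integral\<^sup>L (std_normal_distribution \<Otimes>\<^sub>M unit_uniform_measure)
        (\<lambda>(t, s). Re (mtrace (K ** mexp (cmat_scale (\<i> * of_real (2 / T * t)) H) ** Uevol H (s * (2 / T * t)) \<rho>)))))
    (at x0)"
proof -
  define a where "a = complex_of_real (sqrt 2 / T)"
  have line: "cmat_scale a (H + cmat_scale (of_real (x - x0)) K)
      = cmat_scale a H + cmat_scale (of_real (x - x0)) (cmat_scale a K)" for x
    by (simp add: cmat_scale_add_right mult.commute)
  have "of_real (2 / sqrt pi * erf_coeff k) * mtrace (mpow_deriv (cmat_scale a H) (cmat_scale a K) (2 * k + 1) ** \<rho>)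
      = of_real ((2 / sqrt pi * (sqrt 2 / T) ^ (2 * k + 1)) * (erf_coeff k * Re (mixed_trace_sum H K \<rho> (2 * k))))"
    for k
    using mtrace_mpow_deriv_cmat_scale[of a H K "2 * k" \<rho>] mixed_trace_sum_real[OF herm, of "2 * k"]
    by (simp add: a_def mult_ac)
  also have "\<dots> k = of_real (2 / T * sqrt (2 / pi)
      * (erf_coeff k * ((2 / T) ^ 2 / 2) ^ k * Re (mixed_trace_sum H K \<rho> (2 * k))))" for k
    unfolding erf_coeff_scaling by (simp add: mult_ac)
  finally have terms: "of_real (2 / sqrt pi * erf_coeff k)
        * mtrace (mpow_deriv (cmat_scale a H) (cmat_scale a K) (2 * k + 1) ** \<rho>)
      = of_real (2 / T * sqrt (2 / pi)
        * (erf_coeff k * ((2 / T) ^ 2 / 2) ^ k * Re (mixed_trace_sum H K \<rho> (2 * k))))" for k .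
  have "(\<lambda>k. complex_of_real (2 / T * sqrt (2 / pi)
        * (erf_coeff k * ((2 / T) ^ 2 / 2) ^ k * Re (mixed_trace_sum H K \<rho> (2 * k)))))
      sums of_real (2 / T * sqrt (2 / pi) * integral\<^sup>L (std_normal_distribution \<Otimes>\<^sub>M unit_uniform_measure)
        (\<lambda>(t, s). Re (mtrace (K ** mexp (cmat_scale (\<i> * of_real (2 / T * t)) H) ** Uevol H (s * (2 / T * t)) \<rho>))))"
    using erf_series_sums_integral_evolution[of "2 / T" H K \<rho>] by (rule sums_of_real[OF sums_mult])
  then show ?thesis
    using has_vector_derivative_mtrace_merf_line[of "cmat_scale a H" x0 "cmat_scale a K" \<rho>]
    unfolding a_def[symmetric] line terms[symmetric] by (simp add: sums_iff)
qed

theorem mainTheorem14: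
  fixes T :: real and \<rho> :: "complex^'n^'n" and Hs :: "'J::finite \<Rightarrow> complex^'n^'n"
    and \<theta> :: "real^'J" and j :: 'J
  assumes "T > 0" and "density_operator \<rho>" and "\<And>k. hermitian (Hs k)"
  shows "((\<lambda>x. mtrace (merf (cmat_scale (of_real (sqrt 2 / T)) (Hsum Hs (vec_upd \<theta> j x))) ** \<rho>))
          has_vector_derivative
          of_real (2 / T * sqrt (2 / pi) *
            integral\<^sup>L (density lborel std_normal_density \<Otimes>\<^sub>M uniform_measure lborel {0..1})
              (\<lambda>(t, s). Re (mtrace (Hs j ** mexp (cmat_scale (\<i> * of_real (2 * t / T)) (Hsum Hs \<theta>))
                                   ** Uevol (Hsum Hs \<theta>) (2 * s * t / T) \<rho>)))))
         (at (\<theta> $ j))"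
proof -
  have herm: "hermitian (Hsum Hs \<theta>)" "hermitian (Hs j)" "hermitian \<rho>"
    using assms(2,3) hermitian_Hsum by (auto simp: density_operator_def positive_semidef_def)
  have "(\<lambda>(t, s). Re (mtrace (Hs j ** mexp (cmat_scale (\<i> * of_real (2 * t / T)) (Hsum Hs \<theta>))
          ** Uevol (Hsum Hs \<theta>) (2 * s * t / T) \<rho>)))
      = (\<lambda>(t, s). Re (mtrace (Hs j ** mexp (cmat_scale (\<i> * of_real (2 / T * t)) (Hsum Hs \<theta>))
          ** Uevol (Hsum Hs \<theta>) (s * (2 / T * t)) \<rho>)))"
    by (simp add: mult_ac)
  then show ?thesis
    using has_vector_derivative_mtrace_merf_integral[OF herm, of T "\<theta> $ j"] by (simp only: Hsum_vec_upd)
qed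

end
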